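(* Let $X$ be a commutative topological free algebra over $\mathbb{K}$ having a set of free generators of infinite cardinality $\alpha$, and suppose $w(X)\le\alpha$. Then there is a family $\{Y_\kappa\}_{\kappa<\alpha}$ of subalgebras of $X$ such that: (1) each $Y_\kappa$ is a dense subalgebra of $X$ of the form $Y_\kappa=\langle F_\kappa\rangle$ with $F_\kappa$ a set of free generators of cardinality $\alpha$; (2) the family is algebraically independent, i.e., the $F_\kappa$ can be chosen pairwise disjoint with $\bigcup_{\kappa<\alpha}F_\kappa$ a set of free generators (in particular $Y_{\kappa_1}\cap Y_{\kappa_2}=\{0\}$ for $\kappa_1\neq\kappa_2$).
   Context: Algebras are associative linear algebras over $\mathbb{K}$ ($\mathbb{R}$ or $\mathbb{C}$); a topological algebra is an algebra with a topology making sum, product and scalar multiplication continuous. $w(X)$ is the smallest cardinality of a base of the topology. $\langle S\rangle$ denotes the subalgebra generated by $S$. With $\mathbb{P}_n$ the polynomials in $n$ variables without constant term, a subset $S$ of a commutative algebra is a set of free generators (SFG) if $P(x_1,\dots,x_n)\ne0$ for every $n$, every non-zero $P\in\mathbb{P}_n$ and all pairwise distinct $x_1,\dots,x_n\in S$. A commutative free algebra is one of the form $X=\langle A\rangle$ with $A$ an SFG; it is $\alpha$-generated free when such $A$ has cardinality $\alpha$. *)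

theory Defs
  imports "HOL-Analysis.Analysis" "HOL-Library.Equipollence"
begin

text \<open>An (associative, commutative, not necessarily unital) algebra over the scalar field 'k
  is modelled as a type 'a of class comm_ring together with a scalar multiplication smul.\<close>

definition algebra_over :: "('k::field \<Rightarrow> 'a::comm_ring \<Rightarrow> 'a) \<Rightarrow> bool" where
  "algebra_over smul \<longleftrightarrow>
     (\<forall>a x y. smul a (x + y) = smul a x + smul a y) \<and>
     (\<forall>a b x. smul (a + b) x = smul a x + smul b x) \<and>
     (\<forall>a b x. smul (a * b) x = smul a (smul b x)) \<and>
     (\<forall>x. smul 1 x = x) \<and>
     (\<forall>a x y. smul a (x * y) = smul a x * y \<and> smul a (x * y) = x * smul a y)"

definition topological_algebra ::
  "('k::{field,topological_space} \<Rightarrow> 'a::{comm_ring,topological_space} \<Rightarrow> 'a) \<Rightarrow> bool" where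
  "topological_algebra smul \<longleftrightarrow>
     algebra_over smul \<and>
     continuous_on UNIV (\<lambda>p::'a \<times> 'a. fst p + snd p) \<and>
     continuous_on UNIV (\<lambda>p::'a \<times> 'a. fst p * snd p) \<and>
     continuous_on UNIV (\<lambda>p::'k \<times> 'a. smul (fst p) (snd p))"

inductive_set gen :: "('k \<Rightarrow> 'a::comm_ring \<Rightarrow> 'a) \<Rightarrow> 'a set \<Rightarrow> 'a set"
  for smul :: "'k \<Rightarrow> 'a \<Rightarrow> 'a" and S :: "'a set" where
  gen_base: "x \<in> S \<Longrightarrow> x \<in> gen smul S"
| gen_zero: "0 \<in> gen smul S"
| gen_add: "x \<in> gen smul S \<Longrightarrow> y \<in> gen smul S \<Longrightarrow> x + y \<in> gen smul S"
| gen_mult: "x \<in> gen smul S \<Longrightarrow> y \<in> gen smul S \<Longrightarrow> x * y \<in> gen smul S"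
| gen_smul: "x \<in> gen smul S \<Longrightarrow> smul a x \<in> gen smul S"

text \<open>Polynomials in n variables without constant term, with coefficients in 'k:
  coefficient functions on exponent vectors m (m i = exponent of variable i, i < n),
  finitely supported, supported on non-constant monomials.\<close>
definition poly_nc :: "nat \<Rightarrow> ((nat \<Rightarrow> nat) \<Rightarrow> 'k::zero) \<Rightarrow> bool" where
  "poly_nc n c \<longleftrightarrow> finite {m. c m \<noteq> 0} \<and>
     (\<forall>m. c m \<noteq> 0 \<longrightarrow> m \<noteq> (\<lambda>_. 0) \<and> (\<forall>i\<ge>n. m i = 0))"

text \<open>Product of a nonempty list in a (possibly non-unital) commutative ring.\<close>
fun prodl :: "'a::comm_ring list \<Rightarrow> 'a" where
  "prodl [] = 0"
| "prodl [x] = x"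
| "prodl (x # xs) = x * prodl xs"

definition mon_eval :: "nat \<Rightarrow> (nat \<Rightarrow> nat) \<Rightarrow> (nat \<Rightarrow> 'a::comm_ring) \<Rightarrow> 'a" where
  "mon_eval n m x = prodl (concat (map (\<lambda>i. replicate (m i) (x i)) [0..<n]))"

definition poly_eval :: "('k::zero \<Rightarrow> 'a::comm_ring \<Rightarrow> 'a) \<Rightarrow> nat \<Rightarrow> ((nat \<Rightarrow> nat) \<Rightarrow> 'k)
    \<Rightarrow> (nat \<Rightarrow> 'a) \<Rightarrow> 'a" where
  "poly_eval smul n c x = (\<Sum>m\<in>{m. c m \<noteq> 0}. smul (c m) (mon_eval n m x))"

definition SFG :: "('k::zero \<Rightarrow> 'a::comm_ring \<Rightarrow> 'a) \<Rightarrow> 'a set \<Rightarrow> bool" where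
  "SFG smul S \<longleftrightarrow>
     (\<forall>n c x. poly_nc n c \<and> c \<noteq> (\<lambda>_. 0) \<and> inj_on x {..<n} \<and> x ` {..<n} \<subseteq> S
        \<longrightarrow> poly_eval smul n c x \<noteq> 0)"

definition weight_le :: "'a::topological_space itself \<Rightarrow> 'b set \<Rightarrow> bool" where
  "weight_le _ A \<longleftrightarrow> (\<exists>B::'a set set. topological_basis B \<and> B \<lesssim> A)"

end

theory Submission
  imports Defs
begin

text \<open>Fix a \<pi>-base of X indexed by A. For each pair (\<kappa>, \<beta>) in A \<times> A pick a point p in the
  \<beta>-th basic open set, written with a finite set s of old generators, and a fresh old
  generator a; the new generator is \<epsilon> a + p, with \<epsilon> \<noteq> 0 chosen by continuity so that it
  stays in that open set. Well-order A \<times> A in type |A|: every proper initial segment uses fewer than |A| old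
  generators, so a can be chosen outside all s of the indices up to the current one. Then
  replacing each a by \<epsilon> a + p is a triangular change of variables, so the new generators
  are still free, and F \<kappa> = {\<epsilon> a + p | \<beta> \<in> A} meets every nonempty open set.\<close>

locale smul_algebra =
  fixes smul :: "'k::field \<Rightarrow> 'a::comm_ring \<Rightarrow> 'a"
  assumes algebra_over: "algebra_over smul"
begin

sublocale vector_space smul
  using algebra_over by unfold_locales (simp_all add: algebra_over_def)

lemma smul_mult_left: "smul a (x * y) = smul a x * y"
  and smul_mult_right: "smul a (x * y) = x * smul a y"
  using algebra_over unfolding algebra_over_def by blast+

lemma smul_mult_smul: "smul a x * smul b y = smul (a * b) (x * y)"
  by (simp flip: smul_mult_left smul_mult_right)

end

text \<open>prodl has no neutral element (prodl [] = 0), so products of factor lists are combined in the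
  option monoid, with None as the empty product.\<close>
definition prodl_opt :: "'a::comm_ring list \<Rightarrow> 'a option" where
  "prodl_opt xs = (if xs = [] then None else Some (prodl xs))"

fun mult_opt :: "'a::comm_ring option \<Rightarrow> 'a option \<Rightarrow> 'a option" where
  "mult_opt None b = b"
| "mult_opt a None = a"
| "mult_opt (Some a) (Some b) = Some (a * b)"

lemma mult_opt_assoc: "mult_opt (mult_opt a b) c = mult_opt a (mult_opt b c)"
  by (cases a; cases b; cases c) (auto simp: mult.assoc)

lemma mult_opt_commute: "mult_opt a b = mult_opt b a"
  by (cases a; cases b) (auto simp: mult.commute)

lemma mult_opt_None_right [simp]: "mult_opt a None = a"
  by (cases a) simp_all

interpretation mult_opt: comm_monoid mult_opt None
  by unfold_locales (rule mult_opt_assoc, rule mult_opt_commute, rule mult_opt_None_right)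

lemma prodl_opt_append: "prodl_opt (xs @ ys) = mult_opt (prodl_opt xs) (prodl_opt ys)"
proof (induction xs)
  case (Cons x xs)
  show ?case
  proof (cases "xs = []")
    case True
    then show ?thesis by (cases ys) (auto simp: prodl_opt_def)
  next
    case False
    then show ?thesis using Cons
      by (cases "ys = []") (auto simp: prodl_opt_def neq_Nil_conv mult.assoc)
  qed
qed (simp add: prodl_opt_def)

definition mon_factors :: "nat \<Rightarrow> (nat \<Rightarrow> nat) \<Rightarrow> (nat \<Rightarrow> 'a) \<Rightarrow> 'a list" where
  "mon_factors n m x = concat (map (\<lambda>i. replicate (m i) (x i)) [0..<n])"

lemma mon_factors_0 [simp]: "mon_factors 0 m x = []"
  by (simp add: mon_factors_def)

lemma mon_factors_Suc: "mon_factors (Suc n) m x = mon_factors n m x @ replicate (m n) (x n)"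
  by (simp add: mon_factors_def)

lemma mon_eval_eq_prodl: "mon_eval n m x = prodl (mon_factors n m x)"
  by (simp add: mon_eval_def mon_factors_def)

lemma mon_factors_eq_Nil_iff: "mon_factors n m x = [] \<longleftrightarrow> (\<forall>i<n. m i = 0)"
  by (induction n) (auto simp: mon_factors_Suc less_Suc_eq)

lemma prodl_opt_mon_factors_add:
  "prodl_opt (mon_factors n (\<lambda>i. m1 i + m2 i) x)
     = mult_opt (prodl_opt (mon_factors n m1 x)) (prodl_opt (mon_factors n m2 x))"
proof (induction n)
  case (Suc n)
  then show ?case
    by (simp add: mon_factors_Suc prodl_opt_append replicate_add mult_opt.assoc mult_opt.left_commute)
qed (simp add: mon_factors_def prodl_opt_def)

lemma mon_eval_add:
  assumes "\<exists>i<n. m1 i \<noteq> 0" and "\<exists>j<n. m2 j \<noteq> 0"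
  shows "mon_eval n (\<lambda>l. m1 l + m2 l) x = mon_eval n m1 x * mon_eval n m2 x"
proof -
  have "mon_factors n m1 x \<noteq> []" "mon_factors n m2 x \<noteq> []"
    and "mon_factors n (\<lambda>l. m1 l + m2 l) x \<noteq> []"
    using assms by (auto simp: mon_factors_eq_Nil_iff)
  then show ?thesis
    using prodl_opt_mon_factors_add[of n m1 m2 x] by (simp add: prodl_opt_def mon_eval_eq_prodl)
qed

definition var_exp :: "nat \<Rightarrow> nat \<Rightarrow> nat" where
  "var_exp i = (\<lambda>l. if l = i then 1 else 0)"

lemma mon_eval_var_exp:
  assumes "i < n"
  shows "mon_eval n (var_exp i) x = x i"
proof -
  have "mon_factors n (var_exp i) x = (if i < n then [x i] else [])" for n
    by (induction n) (auto simp: mon_factors_Suc var_exp_def less_Suc_eq)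
  then show ?thesis
    using assms by (simp add: mon_eval_eq_prodl)
qed

lemma poly_eval_cong:
  "(\<And>i. i < n \<Longrightarrow> x i = y i) \<Longrightarrow> poly_eval smul n c x = poly_eval smul n c y"
  unfolding poly_eval_def mon_eval_def
  by (intro sum.cong refl arg_cong[where f = "smul _"] arg_cong[where f = prodl]
      arg_cong[where f = concat] map_cong) auto

text \<open>Formal expressions in the algebra operations. Their values are exactly the elements of
  generated subalgebras (gen_iff_aeval), and in variables below n they normalise to polynomials
  without constant term (aeval_eq_poly_eval); this is how SFG, phrased with polynomials, is
  applied to arbitrary elements of gen.\<close>
datatype ('k, 'v) aterm =
  Var 'v | Zero | Add "('k, 'v) aterm" "('k, 'v) aterm" | Mul "('k, 'v) aterm" "('k, 'v) aterm"
  | Scale 'k "('k, 'v) aterm"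

fun aeval :: "('k \<Rightarrow> 'a::comm_ring \<Rightarrow> 'a) \<Rightarrow> ('v \<Rightarrow> 'a) \<Rightarrow> ('k, 'v) aterm \<Rightarrow> 'a" where
  "aeval smul x (Var v) = x v"
| "aeval smul x Zero = 0"
| "aeval smul x (Add e1 e2) = aeval smul x e1 + aeval smul x e2"
| "aeval smul x (Mul e1 e2) = aeval smul x e1 * aeval smul x e2"
| "aeval smul x (Scale a e) = smul a (aeval smul x e)"

fun avars :: "('k, 'v) aterm \<Rightarrow> 'v set" where
  "avars (Var v) = {v}"
| "avars Zero = {}"
| "avars (Add e1 e2) = avars e1 \<union> avars e2"
| "avars (Mul e1 e2) = avars e1 \<union> avars e2"
| "avars (Scale a e) = avars e"

fun asubst :: "('v \<Rightarrow> ('k, 'w) aterm) \<Rightarrow> ('k, 'v) aterm \<Rightarrow> ('k, 'w) aterm" where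
  "asubst \<sigma> (Var v) = \<sigma> v"
| "asubst \<sigma> Zero = Zero"
| "asubst \<sigma> (Add e1 e2) = Add (asubst \<sigma> e1) (asubst \<sigma> e2)"
| "asubst \<sigma> (Mul e1 e2) = Mul (asubst \<sigma> e1) (asubst \<sigma> e2)"
| "asubst \<sigma> (Scale a e) = Scale a (asubst \<sigma> e)"

lemma finite_avars: "finite (avars e)"
  by (induction e) auto

lemma aeval_cong: "(\<And>v. v \<in> avars e \<Longrightarrow> x v = y v) \<Longrightarrow> aeval smul x e = aeval smul y e"
  by (induction e) auto

lemma aeval_asubst: "aeval smul x (asubst \<sigma> e) = aeval smul (\<lambda>v. aeval smul x (\<sigma> v)) e"
  by (induction e) auto

lemma avars_asubst: "avars (asubst \<sigma> e) = (\<Union>v\<in>avars e. avars (\<sigma> v))"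
  by (induction e) auto

lemma gen_iff_aeval: "x \<in> gen smul S \<longleftrightarrow> (\<exists>e. avars e \<subseteq> S \<and> aeval smul (\<lambda>u. u) e = x)"
proof
  show "x \<in> gen smul S \<Longrightarrow> \<exists>e. avars e \<subseteq> S \<and> aeval smul (\<lambda>u. u) e = x"
  proof (induction rule: gen.induct)
    case (gen_base x)
    show ?case by (rule exI[of _ "Var x"]) (simp add: gen_base)
  next
    case gen_zero
    show ?case by (rule exI[of _ Zero]) simp
  next
    case (gen_add x y)
    then obtain e1 e2 where "avars e1 \<subseteq> S" "aeval smul (\<lambda>u. u) e1 = x" "avars e2 \<subseteq> S" "aeval smul (\<lambda>u. u) e2 = y"
      by blast
    then show ?case by (intro exI[of _ "Add e1 e2"]) auto
  next
    case (gen_mult x y)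
    then obtain e1 e2 where "avars e1 \<subseteq> S" "aeval smul (\<lambda>u. u) e1 = x" "avars e2 \<subseteq> S" "aeval smul (\<lambda>u. u) e2 = y"
      by blast
    then show ?case by (intro exI[of _ "Mul e1 e2"]) auto
  next
    case (gen_smul x a)
    then obtain e where "avars e \<subseteq> S" "aeval smul (\<lambda>u. u) e = x"
      by blast
    then show ?case by (intro exI[of _ "Scale a e"]) auto
  qed
  have "avars e \<subseteq> S \<Longrightarrow> aeval smul (\<lambda>u. u) e \<in> gen smul S" for e
    by (induction e) (auto intro: gen.intros)
  then show "\<exists>e. avars e \<subseteq> S \<and> aeval smul (\<lambda>u. u) e = x \<Longrightarrow> x \<in> gen smul S"
    by blast
qed

lemma gen_mono: "S \<subseteq> T \<Longrightarrow> gen smul S \<subseteq> gen smul T"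
  using gen_iff_aeval[of _ smul S] gen_iff_aeval[of _ smul T] by blast

lemma gen_finite_support: "x \<in> gen smul S \<Longrightarrow> \<exists>T. finite T \<and> T \<subseteq> S \<and> x \<in> gen smul T"
  by (metis finite_avars gen_iff_aeval order_refl)

lemma poly_nc_nonconstant: "poly_nc n c \<Longrightarrow> c m \<noteq> 0 \<Longrightarrow> \<exists>i<n. m i \<noteq> 0"
  unfolding poly_nc_def by (metis not_le)

definition exp_add :: "(nat \<Rightarrow> nat) \<times> (nat \<Rightarrow> nat) \<Rightarrow> nat \<Rightarrow> nat" where
  "exp_add p = (\<lambda>l. fst p l + snd p l)"

definition coeff_mult ::
  "((nat \<Rightarrow> nat) \<Rightarrow> 'k::field) \<Rightarrow> ((nat \<Rightarrow> nat) \<Rightarrow> 'k) \<Rightarrow> (nat \<Rightarrow> nat) \<Rightarrow> 'k" where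
  "coeff_mult c d m =
     (\<Sum>p\<in>{p \<in> {m. c m \<noteq> 0} \<times> {m. d m \<noteq> 0}. exp_add p = m}. c (fst p) * d (snd p))"

lemma coeff_mult_support:
  "{m. coeff_mult c d m \<noteq> 0} \<subseteq> exp_add ` ({m. c m \<noteq> 0} \<times> {m. d m \<noteq> 0})"
  unfolding coeff_mult_def by (force elim: sum.not_neutral_contains_not_neutral)

lemma poly_nc_coeff_mult:
  assumes c: "poly_nc n c" and d: "poly_nc n d"
  shows "poly_nc n (coeff_mult c d)"
proof -
  have "finite (exp_add ` ({m. c m \<noteq> 0} \<times> {m. d m \<noteq> 0}))"
    using c d unfolding poly_nc_def by auto
  then have "finite {m. coeff_mult c d m \<noteq> 0}"
    by (rule finite_subset[OF coeff_mult_support])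
  moreover have "m \<noteq> (\<lambda>_. 0) \<and> (\<forall>i\<ge>n. m i = 0)"
    if "m \<in> exp_add ` ({m. c m \<noteq> 0} \<times> {m. d m \<noteq> 0})" for m
  proof -
    from that obtain m1 m2 where m: "c m1 \<noteq> 0" "d m2 \<noteq> 0" "m = exp_add (m1, m2)"
      by auto
    have "\<exists>i<n. m i \<noteq> 0"
      using poly_nc_nonconstant[of n c m1, OF c m(1)] m(3) by (auto simp: exp_add_def)
    moreover have "\<forall>i\<ge>n. m i = 0"
      using m c d by (simp add: poly_nc_def exp_add_def)
    ultimately show ?thesis
      by auto
  qed
  ultimately show ?thesis
    using coeff_mult_support[of c d] unfolding poly_nc_def by (auto simp: subset_iff)
qed

fun aterm_coeffs :: "('k::field, nat) aterm \<Rightarrow> (nat \<Rightarrow> nat) \<Rightarrow> 'k" where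
  "aterm_coeffs (Var i) = (\<lambda>m. if m = var_exp i then 1 else 0)"
| "aterm_coeffs Zero = (\<lambda>m. 0)"
| "aterm_coeffs (Add e1 e2) = (\<lambda>m. aterm_coeffs e1 m + aterm_coeffs e2 m)"
| "aterm_coeffs (Mul e1 e2) = coeff_mult (aterm_coeffs e1) (aterm_coeffs e2)"
| "aterm_coeffs (Scale a e) = (\<lambda>m. a * aterm_coeffs e m)"

lemma poly_nc_aterm_coeffs: "avars e \<subseteq> {..<n} \<Longrightarrow> poly_nc n (aterm_coeffs e)"
proof (induction e)
  case (Var i)
  then have "{m. aterm_coeffs (Var i) m \<noteq> 0} = {var_exp i}"
    by auto
  moreover have "var_exp i \<noteq> (\<lambda>_. 0)"
    by (metis var_exp_def zero_neq_one)
  ultimately show ?case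
    using Var by (auto simp: poly_nc_def var_exp_def)
next
  case (Add e1 e2)
  let ?S = "{m. aterm_coeffs e1 m \<noteq> 0} \<union> {m. aterm_coeffs e2 m \<noteq> 0}"
  have "{m. aterm_coeffs (Add e1 e2) m \<noteq> 0} \<subseteq> ?S"
    by auto
  moreover have "finite ?S" "\<forall>m\<in>?S. m \<noteq> (\<lambda>_. 0) \<and> (\<forall>i\<ge>n. m i = 0)"
    using Add unfolding poly_nc_def by auto
  ultimately show ?case
    unfolding poly_nc_def by (blast intro: finite_subset)
next
  case (Mul e1 e2)
  then show ?case
    by (simp add: poly_nc_coeff_mult)
next
  case (Scale a e)
  then show ?case
    unfolding poly_nc_def by (auto intro: finite_subset[of _ "{m. aterm_coeffs e m \<noteq> 0}"])
qed (simp add: poly_nc_def)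

context smul_algebra
begin

lemma poly_eval_superset:
  "finite M \<Longrightarrow> {m. c m \<noteq> 0} \<subseteq> M \<Longrightarrow>
    poly_eval smul n c x = (\<Sum>m\<in>M. smul (c m) (mon_eval n m x))"
  unfolding poly_eval_def by (rule sum.mono_neutral_left) auto

lemma poly_eval_coeff_mult:
  assumes c: "poly_nc n c" and d: "poly_nc n d"
  shows "poly_eval smul n (coeff_mult c d) x = poly_eval smul n c x * poly_eval smul n d x"
proof -
  define mon where "mon m = mon_eval n m x" for m
  let ?S1 = "{m. c m \<noteq> 0}" and ?S2 = "{m. d m \<noteq> 0}"
  have fin: "finite (?S1 \<times> ?S2)"
    using c d unfolding poly_nc_def by auto
  have "poly_eval smul n c x * poly_eval smul n d x
      = (\<Sum>p\<in>?S1 \<times> ?S2. smul (c (fst p)) (mon (fst p)) * smul (d (snd p)) (mon (snd p)))"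
    by (simp add: poly_eval_def mon_def sum_product sum.cartesian_product case_prod_beta)
  also have "\<dots> = (\<Sum>p\<in>?S1 \<times> ?S2. smul (c (fst p) * d (snd p)) (mon (exp_add p)))"
  proof (rule sum.cong[OF refl])
    fix p assume "p \<in> ?S1 \<times> ?S2"
    then have "\<exists>i<n. fst p i \<noteq> 0" "\<exists>j<n. snd p j \<noteq> 0"
      using poly_nc_nonconstant[OF c] poly_nc_nonconstant[OF d] by auto
    then show "smul (c (fst p)) (mon (fst p)) * smul (d (snd p)) (mon (snd p))
        = smul (c (fst p) * d (snd p)) (mon (exp_add p))"
      by (simp add: smul_mult_smul mon_def exp_add_def mon_eval_add)
  qed
  also have "\<dots> = (\<Sum>m\<in>exp_add ` (?S1 \<times> ?S2).
      \<Sum>p\<in>{p \<in> ?S1 \<times> ?S2. exp_add p = m}. smul (c (fst p) * d (snd p)) (mon (exp_add p)))"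
    by (rule sum.image_gen[OF fin])
  also have "\<dots> = (\<Sum>m\<in>exp_add ` (?S1 \<times> ?S2). smul (coeff_mult c d m) (mon m))"
    unfolding coeff_mult_def scale_sum_left by (intro sum.cong refl) auto
  also have "\<dots> = poly_eval smul n (coeff_mult c d) x"
    unfolding mon_def using fin coeff_mult_support[of c d] by (intro poly_eval_superset[symmetric]) auto
  finally show ?thesis
    by simp
qed

lemma aeval_eq_poly_eval: "avars e \<subseteq> {..<n} \<Longrightarrow> aeval smul x e = poly_eval smul n (aterm_coeffs e) x"
proof (induction e)
  case (Var i)
  then have "{m. aterm_coeffs (Var i) m \<noteq> (0::'k)} = {var_exp i}"
    by auto
  then show ?case
    using Var by (simp add: poly_eval_def mon_eval_var_exp)
next
  case (Add e1 e2)
  let ?M = "{m. aterm_coeffs e1 m \<noteq> 0} \<union> {m. aterm_coeffs e2 m \<noteq> 0}"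
  have fin: "finite ?M"
    using Add.prems poly_nc_aterm_coeffs unfolding poly_nc_def by auto
  have "poly_eval smul n (aterm_coeffs (Add e1 e2)) x
      = (\<Sum>m\<in>?M. smul (aterm_coeffs e1 m) (mon_eval n m x))
        + (\<Sum>m\<in>?M. smul (aterm_coeffs e2 m) (mon_eval n m x))"
    by (subst poly_eval_superset[OF fin]) (auto simp: scale_left_distrib sum.distrib)
  also have "\<dots> = poly_eval smul n (aterm_coeffs e1) x + poly_eval smul n (aterm_coeffs e2) x"
    by (simp add: poly_eval_superset[OF fin])
  finally show ?case
    using Add by simp
next
  case (Scale a e)
  have fin: "finite {m. aterm_coeffs e m \<noteq> 0}"
    using Scale.prems poly_nc_aterm_coeffs unfolding poly_nc_def by auto
  have "poly_eval smul n (aterm_coeffs (Scale a e)) x = smul a (poly_eval smul n (aterm_coeffs e) x)"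
    by (subst poly_eval_superset[OF fin]) (auto simp: poly_eval_def scale_sum_right)
  then show ?case
    using Scale by simp
next
  case (Mul e1 e2)
  then have "poly_nc n (aterm_coeffs e1)" "poly_nc n (aterm_coeffs e2)"
    by (simp_all add: poly_nc_aterm_coeffs)
  then show ?case
    using Mul by (simp add: poly_eval_coeff_mult)
qed (simp add: poly_eval_def)

end

fun prod_aterm :: "('k, 'v) aterm list \<Rightarrow> ('k, 'v) aterm" where
  "prod_aterm [] = Zero"
| "prod_aterm [e] = e"
| "prod_aterm (e # es) = Mul e (prod_aterm es)"

lemma aeval_prod_aterm: "aeval smul x (prod_aterm es) = prodl (map (aeval smul x) es)"
  by (induction es rule: prod_aterm.induct) auto

lemma avars_prod_aterm: "avars (prod_aterm es) \<subseteq> (\<Union>e\<in>set es. avars e)"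
  by (induction es rule: prod_aterm.induct) auto

definition mon_aterm :: "nat \<Rightarrow> (nat \<Rightarrow> nat) \<Rightarrow> ('k, nat) aterm" where
  "mon_aterm n m = prod_aterm (mon_factors n m Var)"

lemma aeval_mon_aterm: "aeval smul x (mon_aterm n m) = mon_eval n m x"
  by (simp add: mon_aterm_def aeval_prod_aterm mon_eval_eq_prodl mon_factors_def map_concat comp_def)

lemma set_mon_factors: "set (mon_factors n m x) \<subseteq> x ` {..<n}"
  by (induction n) (auto simp: mon_factors_Suc)

lemma avars_mon_aterm: "avars (mon_aterm n m) \<subseteq> {..<n}"
proof -
  have "avars e \<subseteq> {..<n}" if "e \<in> set (mon_factors n m Var)" for e :: "('k, nat) aterm"
    using that set_mon_factors[of n m Var] by auto
  then show ?thesis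
    using avars_prod_aterm[of "mon_factors n m Var"] by (auto simp: mon_aterm_def)
qed

definition poly_aterm :: "nat \<Rightarrow> ((nat \<Rightarrow> nat) \<Rightarrow> 'k::zero) \<Rightarrow> ('k, nat) aterm" where
  "poly_aterm n c = foldr Add
     (map (\<lambda>m. Scale (c m) (mon_aterm n m)) (SOME ms. set ms = {m. c m \<noteq> 0} \<and> distinct ms)) Zero"

lemma avars_poly_aterm: "avars (poly_aterm n c) \<subseteq> {..<n}"
proof -
  have "avars (foldr Add (map (\<lambda>m. Scale (c m) (mon_aterm n m)) ms) Zero) \<subseteq> {..<n}" for ms
    using avars_mon_aterm by (induction ms) auto
  then show ?thesis
    by (simp add: poly_aterm_def)
qed

lemma aeval_poly_aterm:
  assumes "poly_nc n c"
  shows "aeval smul x (poly_aterm n c) = poly_eval smul n c x"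
proof -
  define ms where "ms = (SOME ms. set ms = {m. c m \<noteq> 0} \<and> distinct ms)"
  have "\<exists>ms. set ms = {m. c m \<noteq> 0} \<and> distinct ms"
    using assms finite_distinct_list unfolding poly_nc_def by blast
  then have ms: "set ms = {m. c m \<noteq> 0}" "distinct ms"
    unfolding ms_def by (metis (mono_tags, lifting) someI_ex)+
  have "aeval smul x (foldr Add (map (\<lambda>m. Scale (c m) (mon_aterm n m)) ms) Zero)
      = (\<Sum>m\<leftarrow>ms. smul (c m) (mon_eval n m x))"
    by (induction ms) (simp_all add: aeval_mon_aterm)
  also have "\<dots> = poly_eval smul n c x"
    using ms by (simp add: sum_list_distinct_conv_sum_set poly_eval_def)
  finally show ?thesis
    by (simp add: poly_aterm_def ms_def)
qed

lemma SFG_poly_eval_nonzero: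
  "SFG smul S \<Longrightarrow> poly_nc n c \<Longrightarrow> c \<noteq> (\<lambda>_. 0) \<Longrightarrow> inj_on x {..<n} \<Longrightarrow> x ` {..<n} \<subseteq> S
    \<Longrightarrow> poly_eval smul n c x \<noteq> 0"
  unfolding SFG_def by blast

lemma SFG_subset: "SFG smul S \<Longrightarrow> T \<subseteq> S \<Longrightarrow> SFG smul T"
  unfolding SFG_def by blast

lemma SFG_if_finite_subsets:
  fixes smul :: "'k::zero \<Rightarrow> 'a::comm_ring \<Rightarrow> 'a"
  assumes "\<And>T. finite T \<Longrightarrow> T \<subseteq> S \<Longrightarrow> SFG smul T"
  shows "SFG smul S"
  unfolding SFG_def
proof (intro allI impI)
  fix n and c :: "(nat \<Rightarrow> nat) \<Rightarrow> 'k" and x :: "nat \<Rightarrow> 'a"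
  assume x: "poly_nc n c \<and> c \<noteq> (\<lambda>_. 0) \<and> inj_on x {..<n} \<and> x ` {..<n} \<subseteq> S"
  then have "SFG smul (x ` {..<n})"
    using assms by blast
  then show "poly_eval smul n c x \<noteq> 0"
    using x unfolding SFG_def by blast
qed

context smul_algebra
begin

lemma aeval_eq_zero: "(\<And>v. v \<in> avars e \<Longrightarrow> x v = 0) \<Longrightarrow> aeval smul x e = 0"
  by (induction e) auto

lemma gen_diff: "x \<in> gen smul S \<Longrightarrow> y \<in> gen smul S \<Longrightarrow> x - y \<in> gen smul S"
  using gen_add[OF _ gen_smul[of y smul S "-1"]] by simp

lemma SFG_aeval_eq_zero_nat:
  fixes x :: "nat \<Rightarrow> 'a"
  assumes "SFG smul S" "inj_on x {..<n}" "x ` {..<n} \<subseteq> S"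
    and "avars e \<subseteq> {..<n}" "aeval smul x e = 0"
  shows "aeval smul y e = 0"
proof -
  have "poly_eval smul n (aterm_coeffs e) x = 0"
    using aeval_eq_poly_eval[OF assms(4), of x] assms(5) by simp
  moreover have "poly_nc n (aterm_coeffs e)"
    using poly_nc_aterm_coeffs[OF assms(4)] .
  ultimately have "aterm_coeffs e = (\<lambda>_. 0)"
    using SFG_poly_eval_nonzero[OF assms(1) _ _ assms(2,3)] by blast
  then show ?thesis
    using aeval_eq_poly_eval[OF assms(4)] by (simp add: poly_eval_def)
qed

lemma SFG_aeval_eq_zero:
  assumes S: "SFG smul S" and vars: "avars e \<subseteq> S" and zero: "aeval smul (\<lambda>u. u) e = 0"
  shows "aeval smul y e = 0"
proof -
  define N where "N = card (avars e)"
  obtain h where h: "bij_betw h {..<N} (avars e)"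
    using ex_bij_betw_nat_finite[OF finite_avars] by (auto simp: N_def atLeast0LessThan)
  define g where "g = the_inv_into {..<N} h"
  have g: "g v < N" "h (g v) = v" if "v \<in> avars e" for v
    using bij_betwE[OF bij_betw_the_inv_into[OF h]] f_the_inv_into_f_bij_betw[OF h that] that
    by (auto simp: g_def)
  define e' where "e' = asubst (\<lambda>v. Var (g v)) e"
  have aeval_e': "aeval smul (\<lambda>i. x (h i)) e' = aeval smul x e" for x :: "'a \<Rightarrow> 'a"
    unfolding e'_def aeval_asubst by (rule aeval_cong) (simp add: g)
  have "avars e' \<subseteq> {..<N}"
    using g by (auto simp: e'_def avars_asubst)
  moreover have "aeval smul h e' = 0"
    using aeval_e'[of "\<lambda>u. u"] zero by simp
  moreover have "inj_on h {..<N}" "h ` {..<N} \<subseteq> S"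
    using h vars by (auto simp: bij_betw_def)
  ultimately have "aeval smul (\<lambda>i. y (h i)) e' = 0"
    by (intro SFG_aeval_eq_zero_nat[OF S, of h N e' "\<lambda>i. y (h i)"])
  then show ?thesis
    by (simp add: aeval_e')
qed

lemma SFG_nonzero:
  assumes "SFG smul S" "a \<in> S"
  shows "a \<noteq> 0"
proof
  assume "a = 0"
  define c where "c = aterm_coeffs (Var 0 :: ('k, nat) aterm)"
  have vars: "avars (Var 0 :: ('k, nat) aterm) \<subseteq> {..<1}"
    by simp
  have "poly_eval smul 1 c (\<lambda>_. a) = 0"
    using aeval_eq_poly_eval[OF vars, of "\<lambda>_. a"] \<open>a = 0\<close> by (simp add: c_def)
  moreover have "poly_nc 1 c" "c \<noteq> (\<lambda>_. 0)"
    using poly_nc_aterm_coeffs[OF vars] by (auto simp: c_def fun_eq_iff)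
  moreover have "inj_on (\<lambda>_. a) {..<1::nat}" "(\<lambda>_. a) ` {..<1::nat} \<subseteq> S"
    using assms(2) by (auto simp: inj_on_def)
  ultimately show False
    using SFG_poly_eval_nonzero[OF assms(1)] by blast
qed

lemma SFG_gen_Int_gen:
  assumes S: "SFG smul S" and "S1 \<subseteq> S" "S2 \<subseteq> S" "S1 \<inter> S2 = {}"
  shows "gen smul S1 \<inter> gen smul S2 = {0}"
proof -
  have "v = 0" if v: "v \<in> gen smul S1" "v \<in> gen smul S2" for v
  proof -
    obtain e1 e2 where e1: "avars e1 \<subseteq> S1" "aeval smul (\<lambda>u. u) e1 = v"
      and e2: "avars e2 \<subseteq> S2" "aeval smul (\<lambda>u. u) e2 = v"
      using v unfolding gen_iff_aeval by blast
    define y where "y u = (if u \<in> S1 then u else 0)" for u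
    have "aeval smul y (Add e1 (Scale (-1) e2)) = 0"
      by (rule SFG_aeval_eq_zero[OF S]) (use e1 e2 assms in auto)
    moreover have "aeval smul y e1 = aeval smul (\<lambda>u. u) e1"
      by (rule aeval_cong) (use e1 in \<open>auto simp: y_def\<close>)
    moreover have "aeval smul y e2 = 0"
      using e2 assms by (intro aeval_eq_zero) (auto simp: y_def)
    ultimately show ?thesis
      using e1 by simp
  qed
  then show ?thesis
    by (auto intro: gen_zero)
qed

lemma SFG_not_in_gen_Diff:
  assumes "SFG smul S" "a \<in> S"
  shows "a \<notin> gen smul (S - {a})"
  using SFG_gen_Int_gen[OF assms(1), of "{a}" "S - {a}"] SFG_nonzero[OF assms] assms(2)
  by (auto intro: gen_base)

lemma SFG_smul_add_not_in_gen_Diff: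
  assumes "SFG smul S" "a \<in> S" "p \<in> gen smul (S - {a})" "e \<noteq> 0"
  shows "smul e a + p \<notin> gen smul (S - {a})"
proof
  assume "smul e a + p \<in> gen smul (S - {a})"
  then have "smul (inverse e) (smul e a + p - p) \<in> gen smul (S - {a})"
    using assms(3) by (intro gen_smul gen_diff)
  then show False
    using SFG_not_in_gen_Diff[OF assms(1,2)] assms(4) by simp
qed

text \<open>Substituting e a + q for the j-th variable turns a relation among the x i into a relation
  among the old generators; it therefore survives sending a to (a - q)/e, which yields the same
  relation with a in place of x j.\<close>
lemma poly_eval_exchange_eq_zero:
  fixes x :: "nat \<Rightarrow> 'a"
  assumes S: "SFG smul (insert a T)" and "a \<notin> T" and q: "q \<in> gen smul T" and "e \<noteq> 0"
    and c: "poly_nc n c" and xT: "\<And>i. i < n \<Longrightarrow> i \<noteq> j \<Longrightarrow> x i \<in> T"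
    and xj: "x j = smul e a + q" and zero: "poly_eval smul n c x = 0"
  shows "poly_eval smul n c (x(j := a)) = 0"
proof -
  obtain Q where Q: "avars Q \<subseteq> T" "aeval smul (\<lambda>u. u) Q = q"
    using q unfolding gen_iff_aeval by blast
  define \<sigma> where "\<sigma> i = (if i = j then Add (Scale e (Var a)) Q else Var (x i))" for i
  define E where "E = asubst \<sigma> (poly_aterm n c)"
  have aeval_E: "aeval smul y E = poly_eval smul n c (\<lambda>i. aeval smul y (\<sigma> i))" for y
    unfolding E_def aeval_asubst by (rule aeval_poly_aterm[OF c])
  have "avars (\<sigma> i) \<subseteq> insert a T" if "i < n" for i
    using Q xT[OF that] by (auto simp: \<sigma>_def)
  then have "avars E \<subseteq> insert a T"
    using avars_poly_aterm by (force simp: E_def avars_asubst)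
  moreover have "aeval smul (\<lambda>u. u) E = poly_eval smul n c x"
    unfolding aeval_E using xj Q by (intro poly_eval_cong) (simp add: \<sigma>_def)
  then have "aeval smul (\<lambda>u. u) E = 0"
    using zero by simp
  ultimately have E_zero: "aeval smul y E = 0" for y
    by (rule SFG_aeval_eq_zero[OF S])
  define y where "y u = (if u = a then smul (inverse e) (a - q) else u)" for u
  have "aeval smul y Q = aeval smul (\<lambda>u. u) Q"
    by (rule aeval_cong) (use Q \<open>a \<notin> T\<close> in \<open>auto simp: y_def\<close>)
  then have "aeval smul y Q = q"
    using Q(2) by simp
  then have "aeval smul y (\<sigma> i) = (x(j := a)) i" if "i < n" for i
    using xT[OF that] \<open>a \<notin> T\<close> \<open>e \<noteq> 0\<close> by (auto simp: \<sigma>_def y_def)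
  then have "aeval smul y E = poly_eval smul n c (x(j := a))"
    unfolding aeval_E by (rule poly_eval_cong)
  then show ?thesis
    using E_zero by simp
qed

lemma SFG_exchange:
  assumes S: "SFG smul (insert a T)" and "a \<notin> T" and q: "q \<in> gen smul T" and "e \<noteq> 0"
  shows "SFG smul (insert (smul e a + q) T)"
  unfolding SFG_def
proof (intro allI impI notI)
  fix n c and x :: "nat \<Rightarrow> 'a"
  assume "poly_nc n c \<and> c \<noteq> (\<lambda>_. 0) \<and> inj_on x {..<n} \<and> x ` {..<n} \<subseteq> insert (smul e a + q) T"
    and zero: "poly_eval smul n c x = 0"
  then have c: "poly_nc n c" "c \<noteq> (\<lambda>_. 0)" and x: "inj_on x {..<n}"
    and x_in: "x ` {..<n} \<subseteq> insert (smul e a + q) T"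
    by auto
  show False
  proof (cases "smul e a + q \<in> x ` {..<n}")
    case False
    then have "x ` {..<n} \<subseteq> insert a T"
      using x_in by (simp add: subset_insert subset_insertI2)
    then show False
      using SFG_poly_eval_nonzero[OF S c x] zero by blast
  next
    case True
    then obtain j where j: "j < n" "x j = smul e a + q"
      by auto
    have xT: "x i \<in> T" if "i < n" "i \<noteq> j" for i
    proof -
      have "x i \<in> insert (smul e a + q) T"
        using x_in that(1) by (simp add: image_subset_iff)
      moreover have "x i \<noteq> x j"
        using inj_onD[OF x] that j(1) by blast
      ultimately show ?thesis
        using j(2) by simp
    qed
    have "poly_eval smul n c (x(j := a)) = 0"
      by (rule poly_eval_exchange_eq_zero[OF S \<open>a \<notin> T\<close> q \<open>e \<noteq> 0\<close> c(1) xT j(2) zero])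
    moreover have "inj_on (x(j := a)) {..<n}"
      using inj_onD[OF x] xT \<open>a \<notin> T\<close> by (auto simp: inj_on_def)
    moreover have "(x(j := a)) ` {..<n} \<subseteq> insert a T"
      using xT by auto
    ultimately show False
      using SFG_poly_eval_nonzero[OF S c] by simp
  qed
qed

end

text \<open>Simultaneous exchange of a well-ordered family a of free generators: each p i may
  involve the generators a j with j strictly below i, but none from i on.\<close>
locale triangular_exchange = smul_algebra smul + wo_rel r
  for smul :: "'k::field \<Rightarrow> 'a::comm_ring \<Rightarrow> 'a" and r :: "'i rel" +
  fixes S :: "'a set" and a :: "'i \<Rightarrow> 'a" and p :: "'i \<Rightarrow> 'a" and e :: "'i \<Rightarrow> 'k"
  assumes SFG_S: "SFG smul S"
    and inj_a: "inj_on a (Field r)" and a_in_S: "a ` Field r \<subseteq> S"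
    and p_in_gen: "i \<in> Field r \<Longrightarrow> p i \<in> gen smul (S - a ` {j. (i, j) \<in> r})"
    and e_nonzero: "i \<in> Field r \<Longrightarrow> e i \<noteq> 0"
begin

definition b :: "'i \<Rightarrow> 'a" where
  "b i = smul (e i) (a i) + p i"

lemma b_notin_gen:
  assumes "i \<in> Field r"
  shows "b i \<notin> gen smul (S - {a i})"
proof -
  have "S - a ` {j. (i, j) \<in> r} \<subseteq> S - {a i}"
    using assms REFL by (auto simp: refl_on_def)
  then have "p i \<in> gen smul (S - {a i})"
    using p_in_gen[OF assms] gen_mono by blast
  then show ?thesis
    unfolding b_def using SFG_S a_in_S e_nonzero assms by (intro SFG_smul_add_not_in_gen_Diff) auto
qed

lemma b_in_gen:
  assumes "(i, j) \<in> r" "i \<noteq> j"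
  shows "b i \<in> gen smul (S - {a j})"
proof -
  have ij: "i \<in> Field r" "j \<in> Field r"
    using assms(1) by (auto intro: FieldI1 FieldI2)
  have "a i \<in> S - {a j}"
    using a_in_S inj_onD[OF inj_a] ij assms(2) by auto
  then have "smul (e i) (a i) \<in> gen smul (S - {a j})"
    by (intro gen_smul gen_base)
  moreover have "p i \<in> gen smul (S - {a j})"
    using p_in_gen[OF ij(1)] assms(1) gen_mono[of "S - a ` {j. (i, j) \<in> r}" "S - {a j}"] by auto
  ultimately show ?thesis
    unfolding b_def by (rule gen_add)
qed

lemma inj_b: "inj_on b (Field r)"
proof (rule inj_onI, rule ccontr)
  fix i j assume ij: "i \<in> Field r" "j \<in> Field r" "b i = b j" "i \<noteq> j"
  then consider "(i, j) \<in> r" | "(j, i) \<in> r"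
    using TOTALS by blast
  then show False
  proof cases
    case 1
    then show False
      using b_in_gen[OF 1 ij(4)] b_notin_gen[OF ij(2)] ij(3) by simp
  next
    case 2
    then show False
      using b_in_gen[OF 2] b_notin_gen[OF ij(1)] ij(3,4) by simp
  qed
qed

lemma b_neq_a:
  assumes "i \<in> Field r" "j \<in> Field r" "i \<noteq> j"
  shows "b j \<noteq> a i"
proof -
  have "a i \<in> gen smul (S - {a j})"
    using a_in_S inj_onD[OF inj_a, of i j] assms by (auto intro!: gen_base)
  then show ?thesis
    using b_notin_gen[OF assms(2)] by auto
qed

text \<open>Exchange the least element m of J last: p m avoids every a j with j in J, so it is generated
  by the set reached for J - {m} without a m.\<close>
lemma SFG_partial_exchange:
  assumes "finite J" "J \<subseteq> Field r"
  shows "SFG smul (b ` J \<union> (S - a ` J))"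
  using assms(1)
proof (induction J rule: finite_remove_induct)
  case empty
  then show ?case
    using SFG_S by simp
next
  case (remove A)
  then have A: "finite A" "A \<noteq> {}" "A \<subseteq> Field r"
    using assms(2) by auto
  define m where "m = minim A"
  have m: "m \<in> A" "\<And>j. j \<in> A \<Longrightarrow> (m, j) \<in> r"
    using A minim_in minim_least unfolding m_def by auto
  define T where "T = b ` (A - {m}) \<union> (S - a ` (A - {m})) - {a m}"
  have "a m \<notin> a ` (A - {m})"
    using m(1) A(3) by (subst inj_on_image_mem_iff[OF inj_a]) auto
  then have "insert (a m) T = b ` (A - {m}) \<union> (S - a ` (A - {m}))"
    using a_in_S m(1) A(3) by (auto simp: T_def)
  then have "SFG smul (insert (a m) T)"
    using remove.IH[OF m(1)] by simp
  moreover have "a m \<notin> T"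
    by (simp add: T_def)
  moreover have "S - a ` {j. (m, j) \<in> r} \<subseteq> T"
    using m by (auto simp: T_def)
  then have "p m \<in> gen smul T"
    using p_in_gen m(1) A(3) gen_mono by blast
  ultimately have "SFG smul (insert (b m) T)"
    unfolding b_def by (rule SFG_exchange) (use e_nonzero m(1) A(3) in auto)
  moreover have "b ` A \<union> (S - a ` A) \<subseteq> insert (b m) T"
    using b_neq_a m(1) A(3) by (auto simp: T_def)
  ultimately show ?case
    by (rule SFG_subset)
qed

lemma SFG_b_image: "SFG smul (b ` Field r)"
proof (rule SFG_if_finite_subsets)
  fix T assume "finite T" "T \<subseteq> b ` Field r"
  then obtain J where "J \<subseteq> Field r" "finite J" "T = b ` J"
    by (meson finite_subset_image)
  then show "SFG smul T"
    using SFG_partial_exchange SFG_subset by blast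
qed

end

unbundle cardinal_syntax

text \<open>The segment under i of the initial ordinal of I is a proper initial segment plus i, hence
  smaller than I unless finite.\<close>
lemma not_subset_UN_under_card_of:
  assumes finite_s: "\<And>j. j \<in> I \<Longrightarrow> finite (s j)" and i: "i \<in> I"
    and "I \<lesssim> D" and "infinite D"
  shows "\<not> D \<subseteq> (\<Union>j\<in>under (card_of I) i. s j)"
proof
  define r where "r = card_of I"
  assume "D \<subseteq> (\<Union>j\<in>under (card_of I) i. s j)"
  then have D_sub: "D \<subseteq> (\<Union>j\<in>under r i. s j)"
    by (simp add: r_def)
  have r: "Well_order r" "Field r = I"
    unfolding r_def by (rule card_of_Well_order, rule Field_card_of)
  have under: "under r i = insert i (underS r i)"
    using r i wo_rel.REFL[of r] by (auto simp: under_def underS_def wo_rel_def refl_on_def)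
  have under_in: "under r i \<subseteq> I"
    using r by (auto simp: under_def intro: FieldI1)
  show False
  proof (cases "finite (underS r i)")
    case True
    then have "finite (\<Union>j\<in>under r i. s j)"
      using finite_s under_in by (auto simp: under)
    then show False
      using finite_subset[OF D_sub] \<open>infinite D\<close> by blast
  next
    case False
    have "|\<Union>j\<in>under r i. s j| \<le>o |underS r i|"
    proof (rule card_of_UNION_ordLeq_infinite[OF False])
      show "|under r i| \<le>o |underS r i|"
        using infinite_insert_eqpoll[OF False, of i]
        by (simp add: under eqpoll_iff_card_of_ordIso ordIso_iff_ordLeq)
      show "\<forall>j\<in>under r i. |s j| \<le>o |underS r i|"
        using finite_s under_in finite_lepoll_infinite[OF False]
        by (auto simp: lepoll_def card_of_ordLeq[symmetric])
    qed
    also have "|underS r i| <o |I|"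
      using card_of_underS[of r i] r i by (simp add: r_def card_of_Card_order)
    also have "|I| \<le>o |D|"
      using \<open>I \<lesssim> D\<close> by (simp add: lepoll_def card_of_ordLeq[symmetric])
    finally show False
      using card_of_mono1[OF D_sub] not_ordLess_ordLeq by blast
  qed
qed

lemma wellorder_avoiding_choice:
  fixes s :: "'i \<Rightarrow> 'a set" and D :: "'i \<Rightarrow> 'a set"
  assumes finite_s: "\<And>i. i \<in> I \<Longrightarrow> finite (s i)"
    and D_large: "\<And>i. i \<in> I \<Longrightarrow> I \<lesssim> D i" and D_infinite: "\<And>i. i \<in> I \<Longrightarrow> infinite (D i)"
    and D_disjoint: "disjoint_family_on D I"
  obtains r a where "Well_order r" "Field r = I" "inj_on a I" "\<And>i. i \<in> I \<Longrightarrow> a i \<in> D i"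
    "\<And>i j. (j, i) \<in> r \<Longrightarrow> a i \<notin> s j"
proof -
  define r where "r = card_of I"
  define C where "C i = (\<Union>j\<in>under r i. s j)" for i
  have r: "Well_order r" "Field r = I"
    unfolding r_def by (rule card_of_Well_order, rule Field_card_of)
  have a: "(SOME x. x \<in> D i - C i) \<in> D i - C i" if "i \<in> I" for i
  proof (rule someI_ex)
    show "\<exists>x. x \<in> D i - C i"
      using not_subset_UN_under_card_of[where s = s and D = "D i", OF finite_s that D_large[OF that]
          D_infinite[OF that]]
      by (auto simp: C_def r_def)
  qed
  show thesis
  proof
    show "inj_on (\<lambda>i. SOME x. x \<in> D i - C i) I"
      using a D_disjoint by (fastforce simp: inj_on_def disjoint_family_on_def)
    show "(j, i) \<in> r \<Longrightarrow> (SOME x. x \<in> D i - C i) \<notin> s j" for i j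
      using a[of i] r by (auto simp: C_def under_def intro: FieldI2)
  qed (use r a in auto)
qed

lemma infinite_Times_eqpoll_self: "infinite A \<Longrightarrow> A \<times> A \<approx> A"
  by (simp add: eqpoll_iff_card_of_ordIso card_of_Times_same_infinite)

lemma exists_disjoint_family_eqpoll:
  assumes "infinite A" "I \<lesssim> A"
  obtains D where "\<And>i. i \<in> I \<Longrightarrow> D i \<subseteq> A" "\<And>i. i \<in> I \<Longrightarrow> D i \<approx> A" "disjoint_family_on D I"
proof -
  have "I \<times> A \<lesssim> A \<times> A"
    using \<open>I \<lesssim> A\<close> by (simp add: times_lepoll_mono)
  also have "A \<times> A \<approx> A"
    using \<open>infinite A\<close> by (rule infinite_Times_eqpoll_self)
  finally obtain \<phi> where \<phi>: "inj_on \<phi> (I \<times> A)" "\<phi> ` (I \<times> A) \<subseteq> A"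
    unfolding lepoll_def by blast
  show thesis
  proof
    show "\<phi> ` ({i} \<times> A) \<subseteq> A" if "i \<in> I" for i
      using \<phi>(2) that by auto
    show "\<phi> ` ({i} \<times> A) \<approx> A" if "i \<in> I" for i
    proof -
      have "\<phi> ` ({i} \<times> A) \<approx> {i} \<times> A"
        by (intro inj_on_image_eqpoll_self inj_on_subset[OF \<phi>(1)]) (use that in auto)
      then show ?thesis
        using times_singleton_eqpoll by (rule eqpoll_trans)
    qed
    show "disjoint_family_on (\<lambda>i. \<phi> ` ({i} \<times> A)) I"
      using \<phi>(1) by (auto simp: disjoint_family_on_def dest: inj_onD)
  qed
qed

lemma topological_algebra_imp_smul_algebra:
  fixes smul :: "'k::{field,topological_space} \<Rightarrow> 'a::{comm_ring,topological_space} \<Rightarrow> 'a"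
  shows "topological_algebra smul \<Longrightarrow> smul_algebra smul"
  by (simp add: topological_algebra_def smul_algebra_def)

text \<open>The scalars form a perfect space, so the open set of t with t a + p in U, which contains 0,
  contains a nonzero t as well.\<close>
lemma topological_algebra_nonzero_smul_add_in_open:
  fixes smul :: "'k::real_normed_field \<Rightarrow> 'a::{comm_ring,topological_space} \<Rightarrow> 'a"
  assumes TA: "topological_algebra smul" and "open U" "p \<in> U"
  shows "\<exists>t. t \<noteq> 0 \<and> smul t a + p \<in> U"
proof -
  interpret smul_algebra smul
    using TA by (rule topological_algebra_imp_smul_algebra)
  have add: "continuous_on UNIV (\<lambda>q::'a \<times> 'a. fst q + snd q)"
    and scale: "continuous_on UNIV (\<lambda>q::'k \<times> 'a. smul (fst q) (snd q))"
    using TA by (auto simp: topological_algebra_def)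
  have "continuous_on UNIV (\<lambda>t::'k. (t, a))"
    by (intro continuous_intros)
  then have "continuous_on UNIV (\<lambda>t::'k. smul t a)"
    using continuous_on_compose2[OF scale, of UNIV "\<lambda>t. (t, a)"] by simp
  then have "continuous_on UNIV (\<lambda>t::'k. (smul t a, p))"
    by (intro continuous_intros)
  then have "continuous_on UNIV (\<lambda>t::'k. smul t a + p)"
    using continuous_on_compose2[OF add, of UNIV "\<lambda>t. (smul t a, p)"] by simp
  then have "open ((\<lambda>t. smul t a + p) -` U)"
    using \<open>open U\<close> by (simp add: continuous_on_open_vimage)
  then have "(\<lambda>t. smul t a + p) -` U \<noteq> {0}"
    using not_open_singleton by metis
  moreover have "0 \<in> (\<lambda>t. smul t a + p) -` U"
    using \<open>p \<in> U\<close> by simp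
  ultimately show ?thesis
    by blast
qed

lemma weight_le_obtains_pi_base:
  fixes A :: "'b set"
  assumes "weight_le TYPE('a) A"
  obtains U :: "'b \<Rightarrow> 'a::topological_space set"
  where "\<And>\<beta>. open (U \<beta>)" "\<And>\<beta>. U \<beta> \<noteq> {}" "\<And>V. open V \<Longrightarrow> V \<noteq> {} \<Longrightarrow> \<exists>\<beta>\<in>A. U \<beta> \<subseteq> V"
proof -
  obtain B :: "'a set set" and h where B: "topological_basis B" and h: "inj_on h B" "h ` B \<subseteq> A"
    using assms unfolding weight_le_def lepoll_def by blast
  define U where "U \<beta> = (if \<beta> \<in> h ` B \<and> inv_into B h \<beta> \<noteq> {} then inv_into B h \<beta> else UNIV)" for \<beta>
  show thesis
  proof
    show "open (U \<beta>)" "U \<beta> \<noteq> {}" for \<beta>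
      using topological_basis_open[OF B] inv_into_into[of \<beta> h B] by (auto simp: U_def)
    show "\<exists>\<beta>\<in>A. U \<beta> \<subseteq> V" if "open V" "V \<noteq> {}" for V
    proof -
      obtain x where "x \<in> V"
        using \<open>V \<noteq> {}\<close> by blast
      then obtain W where "W \<in> B" "x \<in> W" "W \<subseteq> V"
        by (rule topological_basisE[OF B \<open>open V\<close>])
      then have "U (h W) = W"
        using inv_into_f_f[OF h(1) \<open>W \<in> B\<close>] by (auto simp: U_def)
      moreover have "h W \<in> A"
        using h(2) \<open>W \<in> B\<close> by auto
      ultimately show ?thesis
        using \<open>W \<subseteq> V\<close> by metis
    qed
  qed
qed

lemma closure_eq_UNIV_if_meets_pi_base:
  assumes "\<And>W. open W \<Longrightarrow> W \<noteq> {} \<Longrightarrow> \<exists>\<beta>\<in>A. V \<beta> \<subseteq> W" and "\<And>\<beta>. \<beta> \<in> A \<Longrightarrow> X \<inter> V \<beta> \<noteq> {}"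
  shows "closure X = UNIV"
proof -
  have "X \<inter> W \<noteq> {}" if W: "open W" "W \<noteq> {}" for W
  proof -
    obtain \<beta> where "\<beta> \<in> A" "V \<beta> \<subseteq> W"
      using assms(1)[OF W] by blast
    then show ?thesis
      using assms(2) by blast
  qed
  then show ?thesis
    using dense_intersects_open[of euclidean X] by auto
qed

lemma exists_free_generators_in_opens:
  fixes smul :: "'k::real_normed_field \<Rightarrow> 'a::{comm_ring,topological_space} \<Rightarrow> 'a"
    and U :: "'i \<Rightarrow> 'a set"
  assumes TA: "topological_algebra smul" and SFG_A: "SFG smul A" and gen_A: "gen smul A = UNIV"
    and "infinite A" and "I \<lesssim> A"
    and U: "\<And>i. i \<in> I \<Longrightarrow> open (U i)" "\<And>i. i \<in> I \<Longrightarrow> U i \<noteq> {}"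
  obtains f where "inj_on f I" "SFG smul (f ` I)" "\<And>i. i \<in> I \<Longrightarrow> f i \<in> U i"
proof -
  interpret smul_algebra smul
    using TA by (rule topological_algebra_imp_smul_algebra)
  define p where "p i = (SOME x. x \<in> U i)" for i
  have p: "p i \<in> U i" if "i \<in> I" for i
    using U(2)[OF that] by (simp add: p_def some_in_eq)
  have "\<forall>i. \<exists>T. finite T \<and> T \<subseteq> A \<and> p i \<in> gen smul T"
    by (intro allI gen_finite_support) (simp add: gen_A)
  then have "\<exists>s. \<forall>i. finite (s i) \<and> s i \<subseteq> A \<and> p i \<in> gen smul (s i)"
    by (rule choice)
  then obtain s where "\<forall>i. finite (s i) \<and> s i \<subseteq> A \<and> p i \<in> gen smul (s i)"
    by blast
  then have s: "\<And>i. finite (s i)" "\<And>i. s i \<subseteq> A" "\<And>i. p i \<in> gen smul (s i)"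
    by simp_all
  obtain D where D: "\<And>i. i \<in> I \<Longrightarrow> D i \<subseteq> A" "\<And>i. i \<in> I \<Longrightarrow> D i \<approx> A" "disjoint_family_on D I"
    using exists_disjoint_family_eqpoll[OF \<open>infinite A\<close> \<open>I \<lesssim> A\<close>] by blast
  obtain r a where r: "Well_order r" "Field r = I" and a: "inj_on a I" "\<And>i. i \<in> I \<Longrightarrow> a i \<in> D i"
    and a_avoids: "\<And>i j. (j, i) \<in> r \<Longrightarrow> a i \<notin> s j"
  proof (rule wellorder_avoiding_choice[of I s D])
    show "I \<lesssim> D i" if "i \<in> I" for i
      using lepoll_trans2[OF \<open>I \<lesssim> A\<close> eqpoll_sym[OF D(2)[OF that]]] .
    show "infinite (D i)" if "i \<in> I" for i
      using eqpoll_finite_iff[OF D(2)[OF that]] \<open>infinite A\<close> by simp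
  qed (use s(1) D(3) in auto)
  have a_in_A: "a i \<in> A" if "i \<in> I" for i
    using a(2)[OF that] D(1)[OF that] by blast
  define e where "e i = (SOME t. t \<noteq> 0 \<and> smul t (a i) + p i \<in> U i)" for i
  have e: "e i \<noteq> 0" "smul (e i) (a i) + p i \<in> U i" if "i \<in> I" for i
    using someI_ex[OF topological_algebra_nonzero_smul_add_in_open[OF TA U(1) p, of i "a i"]] that
    by (simp_all add: e_def)
  interpret triangular_exchange smul r A a p e
  proof
    show "inj_on a (Field r)" "a ` Field r \<subseteq> A" "\<And>i. i \<in> Field r \<Longrightarrow> e i \<noteq> 0"
      using a(1) a_in_A e(1) r(2) by auto
    show "p i \<in> gen smul (A - a ` {j. (i, j) \<in> r})" for i
    proof -
      have "s i \<subseteq> A - a ` {j. (i, j) \<in> r}"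
        using s(2)[of i] a_avoids by auto
      then show ?thesis
        using gen_mono s(3)[of i] by blast
    qed
  qed (use r(1) SFG_A in \<open>simp_all add: wo_rel_def\<close>)
  show thesis
  proof
    show "inj_on b I" "SFG smul (b ` I)"
      using inj_b SFG_b_image r(2) by simp_all
    show "b i \<in> U i" if "i \<in> I" for i
      using e(2)[OF that] by (simp add: b_def)
  qed
qed

lemma free_dense_independent_family:
  fixes smul :: "'k::real_normed_field \<Rightarrow> 'a::{comm_ring,topological_space} \<Rightarrow> 'a" and A :: "'a set"
  assumes TA: "topological_algebra smul" and SFG_A: "SFG smul A" and gen_A: "gen smul A = UNIV"
    and inf: "infinite A" and weight: "weight_le TYPE('a) A"
  shows "\<exists>F :: 'a \<Rightarrow> 'a set.
            (\<forall>k\<in>A. SFG smul (F k) \<and> F k \<approx> A \<and> closure (gen smul (F k)) = UNIV) \<and>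
            (\<forall>k1\<in>A. \<forall>k2\<in>A. k1 \<noteq> k2 \<longrightarrow> F k1 \<inter> F k2 = {}) \<and>
            SFG smul (\<Union>k\<in>A. F k) \<and>
            (\<forall>k1\<in>A. \<forall>k2\<in>A. k1 \<noteq> k2 \<longrightarrow> gen smul (F k1) \<inter> gen smul (F k2) = {0})"
proof -
  interpret smul_algebra smul
    using TA by (rule topological_algebra_imp_smul_algebra)
  obtain V :: "'a \<Rightarrow> 'a set" where V: "\<And>\<beta>. open (V \<beta>)" "\<And>\<beta>. V \<beta> \<noteq> {}"
    and V_base: "\<And>W. open W \<Longrightarrow> W \<noteq> {} \<Longrightarrow> \<exists>\<beta>\<in>A. V \<beta> \<subseteq> W"
    using weight_le_obtains_pi_base[OF weight] by blast
  have "A \<times> A \<lesssim> A"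
    using infinite_Times_eqpoll_self[OF inf] by (rule eqpoll_imp_lepoll)
  then obtain f where f: "inj_on f (A \<times> A)" "SFG smul (f ` (A \<times> A))"
    and f_in_V: "\<And>i. i \<in> A \<times> A \<Longrightarrow> f i \<in> V (snd i)"
    by (rule exists_free_generators_in_opens[OF TA SFG_A gen_A inf, where U = "\<lambda>i. V (snd i)"])
      (simp_all add: V that)
  define F where "F \<kappa> = f ` ({\<kappa>} \<times> A)" for \<kappa>
  have F_sub: "F \<kappa> \<subseteq> f ` (A \<times> A)" if "\<kappa> \<in> A" for \<kappa>
    using that by (auto simp: F_def)
  have "SFG smul (F \<kappa>)" "F \<kappa> \<approx> A" "closure (gen smul (F \<kappa>)) = UNIV" if "\<kappa> \<in> A" for \<kappa>
  proof -
    show "SFG smul (F \<kappa>)"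
      using SFG_subset[OF f(2) F_sub[OF that]] .
    have "F \<kappa> \<approx> {\<kappa>} \<times> A"
      unfolding F_def by (intro inj_on_image_eqpoll_self inj_on_subset[OF f(1)]) (use that in auto)
    then show "F \<kappa> \<approx> A"
      using times_singleton_eqpoll by (rule eqpoll_trans)
    show "closure (gen smul (F \<kappa>)) = UNIV"
    proof (rule closure_eq_UNIV_if_meets_pi_base[OF V_base])
      fix \<beta> assume "\<beta> \<in> A"
      then have "f (\<kappa>, \<beta>) \<in> gen smul (F \<kappa>)" "f (\<kappa>, \<beta>) \<in> V \<beta>"
        using f_in_V[of "(\<kappa>, \<beta>)"] \<open>\<kappa> \<in> A\<close> by (auto simp: F_def intro: gen_base)
      then show "gen smul (F \<kappa>) \<inter> V \<beta> \<noteq> {}"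
        by blast
    qed
  qed
  moreover have "F \<kappa>1 \<inter> F \<kappa>2 = {}" if "\<kappa>1 \<in> A" "\<kappa>2 \<in> A" "\<kappa>1 \<noteq> \<kappa>2" for \<kappa>1 \<kappa>2
    using that inj_onD[OF f(1)] by (auto simp: F_def)
  moreover have "SFG smul (\<Union>\<kappa>\<in>A. F \<kappa>)"
    using F_sub by (intro SFG_subset[OF f(2)]) auto
  ultimately show ?thesis
    using SFG_gen_Int_gen[OF f(2) F_sub F_sub] by (intro exI[of _ F]) auto
qed

theorem theorem4p5:
  fixes smR :: "real \<Rightarrow> 'a::{comm_ring,topological_space} \<Rightarrow> 'a" and AR :: "'a set"
    and smC :: "complex \<Rightarrow> 'b::{comm_ring,topological_space} \<Rightarrow> 'b" and AC :: "'b set"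
  shows
   "(topological_algebra smR \<and> SFG smR AR \<and> gen smR AR = UNIV \<and> infinite AR
       \<and> weight_le TYPE('a) AR
     \<longrightarrow> (\<exists>F :: 'a \<Rightarrow> 'a set.
            (\<forall>k\<in>AR. SFG smR (F k) \<and> F k \<approx> AR \<and> closure (gen smR (F k)) = UNIV) \<and>
            (\<forall>k1\<in>AR. \<forall>k2\<in>AR. k1 \<noteq> k2 \<longrightarrow> F k1 \<inter> F k2 = {}) \<and>
            SFG smR (\<Union>k\<in>AR. F k) \<and>
            (\<forall>k1\<in>AR. \<forall>k2\<in>AR. k1 \<noteq> k2 \<longrightarrow> gen smR (F k1) \<inter> gen smR (F k2) = {0})))
  \<and> (topological_algebra smC \<and> SFG smC AC \<and> gen smC AC = UNIV \<and> infinite AC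
       \<and> weight_le TYPE('b) AC
     \<longrightarrow> (\<exists>F :: 'b \<Rightarrow> 'b set.
            (\<forall>k\<in>AC. SFG smC (F k) \<and> F k \<approx> AC \<and> closure (gen smC (F k)) = UNIV) \<and>
            (\<forall>k1\<in>AC. \<forall>k2\<in>AC. k1 \<noteq> k2 \<longrightarrow> F k1 \<inter> F k2 = {}) \<and>
            SFG smC (\<Union>k\<in>AC. F k) \<and>
            (\<forall>k1\<in>AC. \<forall>k2\<in>AC. k1 \<noteq> k2 \<longrightarrow> gen smC (F k1) \<inter> gen smC (F k2) = {0})))"
  using free_dense_independent_family[of smR AR] free_dense_independent_family[of smC AC]
  by blast

end
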